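(* Let $a,b,c$ be parameters (real or complex numbers) such that no denominator below vanishes, let $u(n,a,b,c)=\frac{\prod_{j=0}^{n-1}(b+jc)}{\prod_{j=0}^{n-1}(a+jc)}$, and for integers $n\ge1$, $m\ge0$ let $$D(n,m,a,b,c)=\det\big(u(i+j+m,a,b,c)\big)_{i,j=0}^{n-1}.$$ Then $$D(n,0,a,b,c)=\prod_{k=1}^{n-1}\frac{k!\,c^k\prod_{j=0}^{k-1}(b+jc)(a-b+jc)}{\prod_{j=0}^{k-1}(a+(j+k-1)c)\prod_{j=0}^{2k-1}(a+jc)}$$ and $$D(n,m,a,b,c)=D(n,0,a,b,c)\prod_{j=0}^{m-1}\prod_{i=0}^{n-1}\frac{b+(j+i)c}{a+(i+n+j-1)c}.$$
   Context: Empty products equal $1$. *)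

theory Defs
  imports Complex_Main "Jordan_Normal_Form.Determinant"
begin

definition u :: "nat \<Rightarrow> complex \<Rightarrow> complex \<Rightarrow> complex \<Rightarrow> complex" where
  "u n a b c = (\<Prod>j<n. b + of_nat j * c) / (\<Prod>j<n. a + of_nat j * c)"

definition D :: "nat \<Rightarrow> nat \<Rightarrow> complex \<Rightarrow> complex \<Rightarrow> complex \<Rightarrow> complex" where
  "D n m a b c = det (mat n n (\<lambda>(i, j). u (i + j + m) a b c))"

end

theory Submission
  imports Defs
begin

text \<open>
  Subtracting \<open>(b + (j-1)c)/(a + (j-1)c)\<close> times the original column \<open>j-1\<close> from
  column \<open>j\<close> of the Hankel matrix of \<open>u\<close> kills its first row except for the corner
  entry \<open>u 0 = 1\<close>, and the remaining minor is, up to row factors \<open>i+1\<close> and column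
  factors, the Hankel matrix with parameters \<open>(a + 2c, b + c)\<close>. Hence \<open>D(n+1,0,a,b,c)\<close>
  is an explicit multiple of \<open>D(n,0,a+2c,b+c,c)\<close>, and the product formula satisfies the
  same recursion. For \<open>m > 0\<close>, \<open>u(i+j+m,a,b,c) = u(m,a,b,c) u(i+j,a+mc,b+mc,c)\<close> pulls
  \<open>u(m)^n\<close> out of the determinant, and shifting \<open>(a,b)\<close> to \<open>(a+c,b+c)\<close> in the product
  formula produces a telescoping factor.
\<close>

abbreviation rising_prod :: "'a::comm_semiring_1 \<Rightarrow> 'a \<Rightarrow> nat \<Rightarrow> 'a" where
  "rising_prod c x k \<equiv> \<Prod>l<k. x + of_nat l * c"

lemma rising_prod_Suc_shift: "rising_prod c x (Suc k) = x * rising_prod c (x + c) k"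
  by (subst prod.lessThan_Suc_shift) (simp add: algebra_simps)

lemma rising_prod_add:
  "rising_prod c x (m + k) = rising_prod c x m * rising_prod c (x + of_nat m * c) k"
  by (induction k) (simp_all add: algebra_simps)

lemma rising_prod_pred_shift:
  "rising_prod c (x + c + of_nat (k - 1) * c) k = rising_prod c (x + of_nat k * c) k"
  by (cases k) (simp_all add: algebra_simps)

lemma prod_divide_eq_rising_prod:
  fixes a b c :: "'a::field"
  shows "(\<Prod>i<n. (b + of_nat i * c) / (a + of_nat (i + n - 1) * c)) =
    rising_prod c b n / rising_prod c (a + of_nat (n - 1) * c) n"
proof -
  have "(\<Prod>i<n. a + of_nat (i + n - 1) * c) = rising_prod c (a + of_nat (n - 1) * c) n"
  proof (rule prod.cong)
    fix i assume "i \<in> {..<n}"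
    then have "i + n - 1 = (n - 1) + i" by auto
    then show "a + of_nat (i + n - 1) * c = a + of_nat (n - 1) * c + of_nat i * c"
      by (simp add: algebra_simps)
  qed simp
  then show ?thesis by (simp add: prod_dividef)
qed

lemma prod_lessThan_eq_prod_atLeast1_atMost_pred:
  fixes f :: "nat \<Rightarrow> 'a::comm_monoid_mult"
  assumes "f 0 = 1"
  shows "(\<Prod>k<n. f k) = (\<Prod>k = 1..n - 1. f k)"
proof (cases n)
  case (Suc m)
  then show ?thesis by (simp add: prod.lessThan_Suc_shift prod.atLeast1_atMost_eq assms del: prod.lessThan_Suc)
qed simp

lemma det_mat_scale_rows_cols:
  fixes f :: "nat \<Rightarrow> nat \<Rightarrow> 'a::comm_ring_1"
  shows "det (mat n n (\<lambda>(i, j). r i * s j * f i j)) =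
    (\<Prod>i<n. r i) * (\<Prod>j<n. s j) * det (mat n n (\<lambda>(i, j). f i j))"
proof -
  have "det (mat n n (\<lambda>(i, j). r i * s j * f i j)) =
      (\<Sum>p | p permutes {0..<n}. signof p * (\<Prod>i = 0..<n. r i * s (p i) * f i (p i)))"
    by (subst det_def'[of _ n]) auto
  also have "\<dots> = (\<Sum>p | p permutes {0..<n}.
      (\<Prod>i<n. r i) * (\<Prod>j<n. s j) * (signof p * (\<Prod>i = 0..<n. f i (p i))))"
  proof (rule sum.cong[OF refl])
    fix p assume "p \<in> {p. p permutes {0..<n}}"
    then have "(\<Prod>i = 0..<n. s (p i)) = (\<Prod>i = 0..<n. s i)"
      using prod.permute[of p "{0..<n}" s] by (simp add: comp_def)
    then show "signof p * (\<Prod>i = 0..<n. r i * s (p i) * f i (p i)) =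
        (\<Prod>i<n. r i) * (\<Prod>j<n. s j) * (signof p * (\<Prod>i = 0..<n. f i (p i)))"
      by (simp add: prod.distrib atLeast0LessThan algebra_simps)
  qed
  also have "\<dots> = (\<Prod>i<n. r i) * (\<Prod>j<n. s j) * det (mat n n (\<lambda>(i, j). f i j))"
    by (subst det_def'[of _ n]) (auto simp: sum_distrib_left)
  finally show ?thesis .
qed

lemma det_mat_sub_scaled_prev_col:
  fixes f :: "nat \<Rightarrow> nat \<Rightarrow> 'a::comm_ring_1"
  shows "det (mat n n (\<lambda>(i, j). if j = 0 then f i j else f i j - l (j - 1) * f i (j - 1))) =
    det (mat n n (\<lambda>(i, j). f i j))"
proof -
  define A where "A = mat n n (\<lambda>(i, j). f i j)"
  define U where "U = mat n n (\<lambda>(i, j). if i = j then 1 else if Suc i = j then - l i else 0)"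
  have A: "A \<in> carrier_mat n n" and U: "U \<in> carrier_mat n n"
    unfolding A_def U_def by auto
  have "det U = 1"
  proof -
    have "upper_triangular U" unfolding U_def upper_triangular_def by auto
    then have "det U = prod_list (diag_mat U)" using det_upper_triangular U by blast
    then show ?thesis unfolding prod_list_diag_prod U_def by simp
  qed
  moreover have "A * U = mat n n (\<lambda>(i, j). if j = 0 then f i j else f i j - l (j - 1) * f i (j - 1))"
  proof (rule eq_matI)
    fix i j assume "i < dim_row (mat n n (\<lambda>(i, j). if j = 0 then f i j else f i j - l (j - 1) * f i (j - 1)))"
      "j < dim_col (mat n n (\<lambda>(i, j). if j = 0 then f i j else f i j - l (j - 1) * f i (j - 1)))"
    then have i: "i < n" and j: "j < n" by auto
    have "(A * U) $$ (i, j) = (\<Sum>k<n. f i k * (if k = j then 1 else if Suc k = j then - l k else 0))"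
      using i j unfolding A_def U_def by (simp add: scalar_prod_def atLeast0LessThan)
    also have "\<dots> = (\<Sum>k<n. (if k = j then f i j else 0) + (if Suc k = j then - l k * f i k else 0))"
      by (rule sum.cong) auto
    also have "\<dots> = (if j = 0 then f i j else f i j - l (j - 1) * f i (j - 1))"
      using j by (cases j) (auto simp: sum.distrib)
    finally show "(A * U) $$ (i, j) = mat n n (\<lambda>(i, j). if j = 0 then f i j else f i j - l (j - 1) * f i (j - 1)) $$ (i, j)"
      using i j by simp
  qed (auto simp: A_def U_def)
  ultimately show ?thesis using det_mult[OF A U] by (simp add: A_def)
qed

lemma det_first_row_zero:
  assumes A: "A \<in> carrier_mat (Suc n) (Suc n)" and zero: "\<And>j. 0 < j \<Longrightarrow> j < Suc n \<Longrightarrow> A $$ (0, j) = 0"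
  shows "det A = A $$ (0, 0) * det (mat_delete A 0 0)"
proof -
  have "det A = (\<Sum>j<Suc n. A $$ (0, j) * cofactor A 0 j)"
    using laplace_expansion_row[OF A] by simp
  also have "\<dots> = A $$ (0, 0) * cofactor A 0 0"
    using zero by (subst sum.lessThan_Suc_shift) simp
  finally show ?thesis by (simp add: cofactor_def)
qed

lemma u_Suc: "u (Suc k) a b c = u k a b c * ((b + of_nat k * c) / (a + of_nat k * c))"
  unfolding u_def by (simp add: times_divide_times_eq)

lemma u_add: "u (m + k) a b c = u m a b c * u k (a + of_nat m * c) (b + of_nat m * c) c"
  unfolding u_def by (simp only: rising_prod_add times_divide_times_eq)

lemma u_Suc_divide:
  "u (Suc k) a b c / (a + of_nat (Suc k) * c) = b / (a * (a + c)) * u k (a + 2 * c) (b + c) c"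
proof -
  have "rising_prod c a (Suc k) * (a + of_nat (Suc k) * c) = rising_prod c a (Suc (Suc k))"
    by simp
  also have "\<dots> = a * (a + c) * rising_prod c (a + 2 * c) k"
    by (simp only: rising_prod_Suc_shift) (simp add: algebra_simps mult_2)
  finally have den: "rising_prod c a (Suc k) * (a + of_nat (Suc k) * c) = \<dots>" .
  show ?thesis
    unfolding u_def divide_divide_eq_left den
    by (simp only: rising_prod_Suc_shift[where x = b] times_divide_times_eq)
qed

lemma u_Suc_Suc_sub_u_Suc:
  assumes nz: "a + of_nat (Suc (i + j)) * c \<noteq> 0" "a + of_nat j * c \<noteq> 0"
  shows "u (Suc (Suc (i + j))) a b c - (b + of_nat j * c) / (a + of_nat j * c) * u (Suc (i + j)) a b c
    = of_nat (Suc i) * (c * (a - b) * b / (a * (a + c) * (a + of_nat j * c))) * u (i + j) (a + 2 * c) (b + c) c"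
proof -
  let ?Ak = "a + of_nat (Suc (i + j)) * c" and ?Aj = "a + of_nat j * c"
  have diff: "(b + of_nat (Suc (i + j)) * c) / ?Ak - (b + of_nat j * c) / ?Aj
      = of_nat (Suc i) * c * (a - b) / (?Ak * ?Aj)"
  proof -
    have "(b + of_nat (Suc (i + j)) * c) * ?Aj - (b + of_nat j * c) * ?Ak = of_nat (Suc i) * c * (a - b)"
      by (simp add: algebra_simps)
    then show ?thesis using nz by (simp add: diff_frac_eq)
  qed
  have "u (Suc (Suc (i + j))) a b c - (b + of_nat j * c) / ?Aj * u (Suc (i + j)) a b c
      = u (Suc (i + j)) a b c * ((b + of_nat (Suc (i + j)) * c) / ?Ak - (b + of_nat j * c) / ?Aj)"
    by (simp only: u_Suc[of "Suc (i + j)"]) (simp add: algebra_simps)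
  also have "\<dots> = of_nat (Suc i) * c * (a - b) / ?Aj * (u (Suc (i + j)) a b c / ?Ak)"
    unfolding diff by (simp add: mult_ac)
  also have "\<dots> = of_nat (Suc i) * (c * (a - b) * b / (a * (a + c) * ?Aj)) * u (i + j) (a + 2 * c) (b + c) c"
    unfolding u_Suc_divide by (simp add: mult_ac)
  finally show ?thesis .
qed

lemma D_Suc_0:
  assumes nz: "\<forall>j<2 * n. a + of_nat j * c \<noteq> 0"
  shows "D (Suc n) 0 a b c = (\<Prod>i<n. of_nat (Suc i)) *
    (\<Prod>j<n. c * (a - b) * b / (a * (a + c) * (a + of_nat j * c))) * D n 0 (a + 2 * c) (b + c) c"
proof -
  define l where "l j = (b + of_nat j * c) / (a + of_nat j * c)" for j
  define s where "s j = c * (a - b) * b / (a * (a + c) * (a + of_nat j * c))" for j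
  define M where "M = mat (Suc n) (Suc n) (\<lambda>(i, j).
    if j = 0 then u (i + j) a b c else u (i + j) a b c - l (j - 1) * u (i + (j - 1)) a b c)"
  have M: "M \<in> carrier_mat (Suc n) (Suc n)" unfolding M_def by simp
  have "D (Suc n) 0 a b c = det M"
    unfolding D_def M_def using det_mat_sub_scaled_prev_col[of "Suc n" "\<lambda>i j. u (i + j) a b c" l]
    by simp
  also have "\<dots> = M $$ (0, 0) * det (mat_delete M 0 0)"
  proof (rule det_first_row_zero[OF M])
    fix j :: nat assume "0 < j" "j < Suc n"
    then obtain k where "j = Suc k" "k < n" by (cases j) auto
    then show "M $$ (0, j) = 0" by (simp add: M_def l_def u_Suc)
  qed
  also have "M $$ (0, 0) = 1" by (simp add: M_def u_def)
  also have "mat_delete M 0 0 = mat n n (\<lambda>(i, j). of_nat (Suc i) * s j * u (i + j) (a + 2 * c) (b + c) c)"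
  proof (rule eq_matI)
    fix i j assume "i < dim_row (mat n n (\<lambda>(i, j). of_nat (Suc i) * s j * u (i + j) (a + 2 * c) (b + c) c))"
      "j < dim_col (mat n n (\<lambda>(i, j). of_nat (Suc i) * s j * u (i + j) (a + 2 * c) (b + c) c))"
    then have i: "i < n" and j: "j < n" by auto
    have "mat_delete M 0 0 $$ (i, j) = u (Suc (Suc (i + j))) a b c - l j * u (Suc (i + j)) a b c"
      using i j by (simp add: mat_delete_def M_def)
    also have "\<dots> = of_nat (Suc i) * s j * u (i + j) (a + 2 * c) (b + c) c"
      unfolding l_def s_def by (rule u_Suc_Suc_sub_u_Suc; rule nz[rule_format]) (use i j in auto)
    finally show "mat_delete M 0 0 $$ (i, j) =
        mat n n (\<lambda>(i, j). of_nat (Suc i) * s j * u (i + j) (a + 2 * c) (b + c) c) $$ (i, j)"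
      using i j by simp
  qed (auto simp: M_def)
  finally show ?thesis
    using det_mat_scale_rows_cols[where r = "\<lambda>i. of_nat (Suc i)" and s = s
        and f = "\<lambda>i j. u (i + j) (a + 2 * c) (b + c) c"]
    by (simp add: D_def s_def)
qed

definition hankel_factor :: "nat \<Rightarrow> complex \<Rightarrow> complex \<Rightarrow> complex \<Rightarrow> complex" where
  "hankel_factor k a b c =
    of_nat (fact k) * c ^ k * (\<Prod>j<k. (b + of_nat j * c) * (a - b + of_nat j * c))
    / ((\<Prod>j<k. a + of_nat (j + k - 1) * c) * (\<Prod>j<2 * k. a + of_nat j * c))"

lemma hankel_factor_rising_prod:
  "hankel_factor k a b c =
    of_nat (fact k) * c ^ k * (rising_prod c b k * rising_prod c (a - b) k)
    / (rising_prod c (a + of_nat (k - 1) * c) k * rising_prod c a (2 * k))"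
proof -
  have "(\<Prod>j<k. a + of_nat (j + k - 1) * c) = rising_prod c (a + of_nat (k - 1) * c) k"
    by (rule prod.cong) (auto simp: algebra_simps)
  then show ?thesis unfolding hankel_factor_def by (simp only: prod.distrib)
qed

lemma hankel_factor_0 [simp]: "hankel_factor 0 a b c = 1"
  by (simp add: hankel_factor_def)

lemma hankel_factor_Suc:
  "hankel_factor (Suc k) a b c = of_nat (Suc k) * (c * (a - b) * b / (a * (a + c) * (a + of_nat k * c)))
    * hankel_factor k (a + 2 * c) (b + c) c"
proof -
  have num: "rising_prod c b (Suc k) * rising_prod c (a - b) (Suc k)
      = b * (a - b) * (rising_prod c (b + c) k * rising_prod c (a + 2 * c - (b + c)) k)"
    by (simp only: rising_prod_Suc_shift) (simp add: algebra_simps)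
  have den1: "rising_prod c (a + of_nat (Suc k - 1) * c) (Suc k)
      = (a + of_nat k * c) * rising_prod c (a + 2 * c + of_nat (k - 1) * c) k"
    using rising_prod_pred_shift[of c "a + c" k]
    by (simp only: rising_prod_Suc_shift) (simp add: algebra_simps mult_2)
  have den2: "rising_prod c a (2 * Suc k) = a * (a + c) * rising_prod c (a + 2 * c) (2 * k)"
    unfolding mult_Suc_right by (simp only: add_2_eq_Suc rising_prod_Suc_shift) (simp add: algebra_simps mult_2)
  show ?thesis
    unfolding hankel_factor_rising_prod num den1 den2 fact_Suc of_nat_mult power_Suc
    by (simp add: mult_ac)
qed

lemma D_0_eq_prod_hankel_factor:
  "\<forall>j<2 * n - 2. a + of_nat j * c \<noteq> 0 \<Longrightarrow> D n 0 a b c = (\<Prod>k<n. hankel_factor k a b c)"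
proof (induction n arbitrary: a b)
  case 0
  then show ?case by (simp add: D_def)
next
  case (Suc n)
  have "\<forall>j<2 * n - 2. a + 2 * c + of_nat j * c \<noteq> 0"
  proof (intro allI impI)
    fix j assume "j < 2 * n - 2"
    then have "j + 2 < 2 * Suc n - 2" by simp
    then have "a + of_nat (j + 2) * c \<noteq> 0" using Suc.prems by blast
    then show "a + 2 * c + of_nat j * c \<noteq> 0" by (simp add: algebra_simps)
  qed
  then have IH: "D n 0 (a + 2 * c) (b + c) c = (\<Prod>k<n. hankel_factor k (a + 2 * c) (b + c) c)"
    by (rule Suc.IH)
  have "D (Suc n) 0 a b c = (\<Prod>i<n. of_nat (Suc i)) *
      (\<Prod>j<n. c * (a - b) * b / (a * (a + c) * (a + of_nat j * c))) * D n 0 (a + 2 * c) (b + c) c"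
    by (rule D_Suc_0) (use Suc.prems in simp)
  also have "\<dots> = (\<Prod>k<n. hankel_factor (Suc k) a b c)"
    unfolding IH hankel_factor_Suc by (simp only: prod.distrib)
  also have "\<dots> = (\<Prod>k<Suc n. hankel_factor k a b c)"
    by (simp only: prod.lessThan_Suc_shift hankel_factor_0 mult_1_left)
  finally show ?case .
qed

text \<open>No non-vanishing hypotheses are needed: after merging products of quotients, which is
  unconditional, both sides are literally the same fraction.\<close>

lemma hankel_factor_shift_step:
  "b / a * hankel_factor n (a + c) (b + c) c *
      (rising_prod c b n / rising_prod c (a + of_nat (n - 1) * c) n) =
    hankel_factor n a b c * (rising_prod c b (Suc n) / rising_prod c (a + of_nat n * c) (Suc n))"
proof -
  let ?F = "of_nat (fact n) * c ^ n * rising_prod c (a - b) n"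
  let ?Pb = "rising_prod c b n" and ?Pbc = "rising_prod c (b + c) n"
  let ?Q = "rising_prod c (a + of_nat (n - 1) * c) n" and ?Qc = "rising_prod c (a + of_nat n * c) n"
  let ?Pa = "rising_prod c a (2 * n)" and ?Pac = "rising_prod c (a + c) (2 * n)"
  let ?A = "a + of_nat (2 * n) * c"
  have b: "rising_prod c b (Suc n) = b * ?Pbc" by (rule rising_prod_Suc_shift)
  have a: "a * ?Pac = ?Pa * ?A"
    by (simp only: rising_prod_Suc_shift[symmetric]) simp
  have Qc: "rising_prod c (a + of_nat n * c) (Suc n) = ?Qc * ?A"
    by (simp add: algebra_simps)
  have "b / a * hankel_factor n (a + c) (b + c) c * (?Pb / ?Q) = ?F * ?Pb * (b * ?Pbc) / ((a * ?Pac) * ?Qc * ?Q)"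
    unfolding hankel_factor_rising_prod[of n "a + c"] rising_prod_pred_shift by (simp add: mult_ac)
  also have "\<dots> = ?F * ?Pb * (b * ?Pbc) / ((?Pa * ?A) * ?Qc * ?Q)"
    by (simp only: a)
  also have "\<dots> = hankel_factor n a b c * (rising_prod c b (Suc n) / rising_prod c (a + of_nat n * c) (Suc n))"
    unfolding hankel_factor_rising_prod b Qc by (simp add: mult_ac)
  finally show ?thesis .
qed

lemma prod_hankel_factor_shift:
  "(b / a) ^ n * (\<Prod>k<n. hankel_factor k (a + c) (b + c) c) =
    (\<Prod>k<n. hankel_factor k a b c) * (\<Prod>i<n. (b + of_nat i * c) / (a + of_nat (i + n - 1) * c))"
proof (induction n)
  case 0
  show ?case by simp
next
  case (Suc n)
  have "(b / a) ^ Suc n * (\<Prod>k<Suc n. hankel_factor k (a + c) (b + c) c) =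
      b / a * hankel_factor n (a + c) (b + c) c * ((b / a) ^ n * (\<Prod>k<n. hankel_factor k (a + c) (b + c) c))"
    by (simp add: mult_ac)
  also have "\<dots> = (\<Prod>k<n. hankel_factor k a b c) * (b / a * hankel_factor n (a + c) (b + c) c *
      (rising_prod c b n / rising_prod c (a + of_nat (n - 1) * c) n))"
    unfolding Suc.IH prod_divide_eq_rising_prod by (simp only: mult_ac)
  also have "\<dots> = (\<Prod>k<Suc n. hankel_factor k a b c) *
      (rising_prod c b (Suc n) / rising_prod c (a + of_nat (Suc n - 1) * c) (Suc n))"
    unfolding hankel_factor_shift_step by (simp only: prod.lessThan_Suc diff_Suc_1 mult_ac)
  finally show ?case unfolding prod_divide_eq_rising_prod .
qed

lemma u_pow_prod_hankel_factor:
  "u m a b c ^ n * (\<Prod>k<n. hankel_factor k (a + of_nat m * c) (b + of_nat m * c) c) =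
    (\<Prod>k<n. hankel_factor k a b c) *
      (\<Prod>j<m. \<Prod>i<n. (b + of_nat (j + i) * c) / (a + of_nat (i + n + j - 1) * c))"
proof (induction m)
  case 0
  show ?case by (simp add: u_def)
next
  case (Suc m)
  let ?a = "a + of_nat m * c" and ?b = "b + of_nat m * c"
  have ratio: "(\<Prod>i<n. (?b + of_nat i * c) / (?a + of_nat (i + n - 1) * c)) =
      (\<Prod>i<n. (b + of_nat (m + i) * c) / (a + of_nat (i + n + m - 1) * c))"
  proof (rule prod.cong)
    fix i assume "i \<in> {..<n}"
    then have "i + n + m - 1 = m + (i + n - 1)" by auto
    then show "(?b + of_nat i * c) / (?a + of_nat (i + n - 1) * c) =
        (b + of_nat (m + i) * c) / (a + of_nat (i + n + m - 1) * c)"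
      by (simp add: algebra_simps)
  qed simp
  have shift: "a + of_nat (Suc m) * c = ?a + c" "b + of_nat (Suc m) * c = ?b + c"
    by (simp_all add: algebra_simps)
  have "u (Suc m) a b c ^ n * (\<Prod>k<n. hankel_factor k (a + of_nat (Suc m) * c) (b + of_nat (Suc m) * c) c)
      = u m a b c ^ n * ((?b / ?a) ^ n * (\<Prod>k<n. hankel_factor k (?a + c) (?b + c) c))"
    unfolding shift u_Suc power_mult_distrib by (simp only: mult.assoc)
  also have "\<dots> = u m a b c ^ n * (\<Prod>k<n. hankel_factor k ?a ?b c) *
      (\<Prod>i<n. (b + of_nat (m + i) * c) / (a + of_nat (i + n + m - 1) * c))"
    unfolding prod_hankel_factor_shift ratio by (simp only: mult.assoc)
  also have "\<dots> = (\<Prod>k<n. hankel_factor k a b c) *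
      (\<Prod>j<Suc m. \<Prod>i<n. (b + of_nat (j + i) * c) / (a + of_nat (i + n + j - 1) * c))"
    unfolding Suc.IH by (simp only: prod.lessThan_Suc mult.assoc)
  finally show ?case .
qed

lemma D_eq_u_pow_D_0: "D n m a b c = u m a b c ^ n * D n 0 (a + of_nat m * c) (b + of_nat m * c) c"
proof -
  have "mat n n (\<lambda>(i, j). u (i + j + m) a b c) =
      u m a b c \<cdot>\<^sub>m mat n n (\<lambda>(i, j). u (i + j + 0) (a + of_nat m * c) (b + of_nat m * c) c)"
    by (rule eq_matI) (auto simp: u_add[symmetric] add.commute)
  then show ?thesis unfolding D_def by simp
qed

theorem corollary2:
  fixes n m :: nat and a b c :: complex
  assumes "n \<ge> 1"
  shows "((\<forall>j < 2 * n - 2. a + of_nat j * c \<noteq> 0) \<longrightarrow>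
           D n 0 a b c =
             (\<Prod>k = 1..n - 1.
                of_nat (fact k) * c ^ k * (\<Prod>j<k. (b + of_nat j * c) * (a - b + of_nat j * c))
                / ((\<Prod>j<k. a + of_nat (j + k - 1) * c) * (\<Prod>j<2 * k. a + of_nat j * c))))
       \<and> ((\<forall>j < 2 * n + m - 2. a + of_nat j * c \<noteq> 0) \<longrightarrow>
           D n m a b c =
             D n 0 a b c * (\<Prod>j<m. \<Prod>i<n. (b + of_nat (j + i) * c) / (a + of_nat (i + n + j - 1) * c)))"
  \<comment> \<open>Both formulas also hold for \<open>n = 0\<close>.\<close>
proof (intro conjI impI)
  assume "\<forall>j < 2 * n - 2. a + of_nat j * c \<noteq> 0"
  then have "D n 0 a b c = (\<Prod>k = 1..n - 1. hankel_factor k a b c)"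
    by (simp add: D_0_eq_prod_hankel_factor prod_lessThan_eq_prod_atLeast1_atMost_pred)
  then show "D n 0 a b c =
      (\<Prod>k = 1..n - 1.
         of_nat (fact k) * c ^ k * (\<Prod>j<k. (b + of_nat j * c) * (a - b + of_nat j * c))
         / ((\<Prod>j<k. a + of_nat (j + k - 1) * c) * (\<Prod>j<2 * k. a + of_nat j * c)))"
    unfolding hankel_factor_def .
next
  assume nz: "\<forall>j < 2 * n + m - 2. a + of_nat j * c \<noteq> 0"
  have nz_shifted: "\<forall>j < 2 * n - 2. a + of_nat m * c + of_nat j * c \<noteq> 0"
  proof (intro allI impI)
    fix j assume "j < 2 * n - 2"
    then have "a + of_nat (m + j) * c \<noteq> 0" by (intro nz[rule_format]) simp
    then show "a + of_nat m * c + of_nat j * c \<noteq> 0" by (simp add: algebra_simps)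
  qed
  have "D n m a b c = u m a b c ^ n * D n 0 (a + of_nat m * c) (b + of_nat m * c) c"
    by (rule D_eq_u_pow_D_0)
  also have "\<dots> = u m a b c ^ n * (\<Prod>k<n. hankel_factor k (a + of_nat m * c) (b + of_nat m * c) c)"
    using nz_shifted by (simp only: D_0_eq_prod_hankel_factor)
  also have "\<dots> = (\<Prod>k<n. hankel_factor k a b c) *
      (\<Prod>j<m. \<Prod>i<n. (b + of_nat (j + i) * c) / (a + of_nat (i + n + j - 1) * c))"
    by (rule u_pow_prod_hankel_factor)
  also have "(\<Prod>k<n. hankel_factor k a b c) = D n 0 a b c"
    using nz by (simp add: D_0_eq_prod_hankel_factor)
  finally show "D n m a b c =
      D n 0 a b c * (\<Prod>j<m. \<Prod>i<n. (b + of_nat (j + i) * c) / (a + of_nat (i + n + j - 1) * c))" .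
qed

end
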